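(* Let $n,k$ be integers with $1<k<n-1$, let $\mathcal{P}_{k,n}=\{x\in[0,1]^n:\sum_{i=1}^nx_i=k\}$, let $\mathcal{F}$ be a strong Bernoulli factory for $\mathcal{P}_{k,n}$, and let $v$ be a vertex of $\mathcal{P}_{k,n}$. Then for every $T\ge0$ the polynomial $P_{v,T}(x)$ is divisible by $\prod_{i:v_i=1}x_i\prod_{i:v_i=0}(1-x_i)$.
   Context: A Bernoulli factory with output set $V$ (for inputs $x\in[0,1]^n$) is a (possibly infinite) rooted binary tree whose internal nodes are labeled by an index $i\in[n]$ or a known constant $c\in(0,1)$ and whose leaves are labeled by elements of $V$; on input $x$ one walks from the root, at a node labeled $i$ flipping a fresh independent coin that is $1$ with probability $x_i$, at a node labeled $c$ a fresh coin of bias $c$, following the edge labeled by the outcome, and outputs the label of the leaf reached; $\mathcal{F}(x)$ is the output and $T_{\mathcal{F}}(x)$ the depth of the leaf reached. For a polytope $\mathcal{P}$ with vertex set $V$, a strong Bernoulli factory for $\mathcal{P}$ is such a factory with output set $V$ that terminates almost surely and satisfies $\mathbb{E}[\mathcal{F}(x)]=x$ for all $x\in\mathcal{P}$. $P_{v,T}(x)=\Pr[\mathcal{F}(x)=v\wedge T_{\mathcal{F}}(x)\le T]$, regarded as the polynomial equal to the sum, over leaves labeled $v$ at depth at most $T$, of the product of the transition probabilities along the root-to-leaf path (each such product has the form $c\prod_ix_i^{a_i}(1-x_i)^{b_i}$ with $c\ge0$). *)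

theory Defs
  imports "HOL-Analysis.Analysis"
begin

datatype ('i, 'v) bnode = Coin 'i | Const real | Leaf 'v

definition is_leaf :: "('i, 'v) bnode \<Rightarrow> bool" where
  "is_leaf nd = (case nd of Leaf _ \<Rightarrow> True | _ \<Rightarrow> False)"

definition leaf_label :: "('i, 'v) bnode \<Rightarrow> 'v" where
  "leaf_label nd = (case nd of Leaf w \<Rightarrow> w | _ \<Rightarrow> undefined)"

text \<open>A (possibly infinite) rooted binary tree is given by a labelling of all finite
  bit strings (paths from the root; True = coin outcome 1).\<close>
type_synonym ('i, 'v) btree = "bool list \<Rightarrow> ('i, 'v) bnode"

definition reachable :: "('i, 'v) btree \<Rightarrow> bool list \<Rightarrow> bool" where
  "reachable t p \<longleftrightarrow> (\<forall>j < length p. \<not> is_leaf (t (take j p)))"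

definition leaves :: "('i, 'v) btree \<Rightarrow> bool list set" where
  "leaves t = {p. reachable t p \<and> is_leaf (t p)}"

definition step_prob :: "('n, 'v) btree \<Rightarrow> real ^ 'n \<Rightarrow> bool list \<Rightarrow> nat \<Rightarrow> real" where
  "step_prob t x p j = (case t (take j p) of
      Coin i \<Rightarrow> (if p ! j then x $ i else 1 - x $ i)
    | Const c \<Rightarrow> (if p ! j then c else 1 - c)
    | Leaf _ \<Rightarrow> 0)"

definition path_prob :: "('n, 'v) btree \<Rightarrow> real ^ 'n \<Rightarrow> bool list \<Rightarrow> real" where
  "path_prob t x p = (\<Prod>j < length p. step_prob t x p j)"

definition bernoulli_factory :: "'v set \<Rightarrow> ('n, 'v) btree \<Rightarrow> bool" where
  "bernoulli_factory V t \<longleftrightarrow>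
     (\<forall>p. reachable t p \<longrightarrow>
        (case t p of Coin _ \<Rightarrow> True | Const c \<Rightarrow> 0 < c \<and> c < 1 | Leaf w \<Rightarrow> w \<in> V))"

definition strong_bernoulli_factory :: "(real ^ 'n) set \<Rightarrow> ('n, real ^ 'n) btree \<Rightarrow> bool" where
  "strong_bernoulli_factory P t \<longleftrightarrow>
     bernoulli_factory {v. v extreme_point_of P} t \<and>
     (\<forall>x \<in> P. (path_prob t x has_sum 1) (leaves t) \<and>
              ((\<lambda>p. path_prob t x p *\<^sub>R leaf_label (t p)) has_sum x) (leaves t))"

definition PvT :: "('n, real ^ 'n) btree \<Rightarrow> real ^ 'n \<Rightarrow> nat \<Rightarrow> real ^ 'n \<Rightarrow> real" where
  "PvT t v T x = (\<Sum>p \<in> {p \<in> leaves t. length p \<le> T \<and> leaf_label (t p) = v}. path_prob t x p)"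

definition Pkn :: "nat \<Rightarrow> (real ^ 'n) set" where
  "Pkn k = {x. (\<forall>i. 0 \<le> x $ i \<and> x $ i \<le> 1) \<and> (\<Sum>i\<in>UNIV. x $ i) = real k}"

end

theory Submission
  imports Defs
begin

text \<open>Fix a leaf labelled \<open>v\<close> and a coordinate \<open>i\<close> with \<open>v\<^sub>i \<in> {0,1}\<close>. If its path never flips
  coin \<open>i\<close> with outcome \<open>v\<^sub>i\<close>, pick \<open>x \<in> P\<^sub>k\<^sub>,\<^sub>n\<close> with \<open>x\<^sub>i = 1 - v\<^sub>i\<close> and all other coordinates
  in \<open>(0,1)\<close> (possible as \<open>1 < k < n - 1\<close>). Every step of the path then has positive probability
  at \<open>x\<close>, so the leaf is reached with positive probability. But \<open>E[F(x)\<^sub>i] = x\<^sub>i\<close> is an extreme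
  value of \<open>[0,1]\<close>, which forces \<open>F(x)\<^sub>i = x\<^sub>i \<noteq> v\<^sub>i\<close> almost surely. Hence each path ending in \<open>v\<close>
  contains, at pairwise distinct depths, a factor \<open>x\<^sub>i\<close> for every \<open>v\<^sub>i = 1\<close> and a factor \<open>1 - x\<^sub>i\<close>
  for every \<open>v\<^sub>i = 0\<close>, and \<open>P\<^sub>v\<^sub>,\<^sub>T\<close> is a finite sum of such path products.\<close>

lemma reachable_take:
  assumes "reachable t p" "j \<le> length p"
  shows "reachable t (take j p)"
  using assms unfolding reachable_def by (auto simp: min_def)

lemma leaf_label_in_outputs:
  assumes "bernoulli_factory V t" "p \<in> leaves t"
  shows "leaf_label (t p) \<in> V"
  using assms unfolding bernoulli_factory_def leaves_def is_leaf_def leaf_label_def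
  by (auto split: bnode.splits)

lemma leaf_path_inner_node:
  assumes "bernoulli_factory V t" "p \<in> leaves t" "j < length p"
  shows "(\<exists>i. t (take j p) = Coin i) \<or> (\<exists>c. t (take j p) = Const c \<and> 0 < c \<and> c < 1)"
proof -
  have "reachable t p" using assms(2) by (simp add: leaves_def)
  then have "reachable t (take j p)" and "\<not> is_leaf (t (take j p))"
    using assms(3) reachable_take[of t p j] by (auto simp: reachable_def)
  then show ?thesis
    using assms(1) unfolding bernoulli_factory_def is_leaf_def
    by (cases "t (take j p)") fastforce+
qed

lemma step_prob_Coin:
  "t (take j p) = Coin i \<Longrightarrow> step_prob t x p j = (if p ! j then x $ i else 1 - x $ i)"
  by (simp add: step_prob_def)

lemma polynomial_function_step_prob:
  fixes t :: "('n::finite, 'v) btree"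
  shows "polynomial_function (\<lambda>x. step_prob t x p j)"
proof (cases "t (take j p)")
  case (Coin i)
  have "polynomial_function (\<lambda>x::real^'n. x $ i)"
    by (rule polynomial_function_bounded_linear) (rule bounded_linear_vec_nth)
  then show ?thesis
    using Coin by (cases "p ! j") (auto simp: step_prob_def)
qed (auto simp: step_prob_def)

lemma path_prob_nonneg:
  assumes "bernoulli_factory V t" "p \<in> leaves t" "\<forall>i. 0 \<le> x $ i \<and> x $ i \<le> 1"
  shows "0 \<le> path_prob t x p"
  unfolding path_prob_def
proof (intro prod_nonneg)
  fix j assume "j \<in> {..<length p}"
  then have j: "j < length p" by simp
  then consider i where "t (take j p) = Coin i"
    | c where "t (take j p) = Const c" "0 < c" "c < 1"
    using leaf_path_inner_node[OF assms(1,2)] by blast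
  then show "0 \<le> step_prob t x p j"
    by cases (use assms(3) j in \<open>auto simp: step_prob_def\<close>)
qed

lemma path_prob_pos:
  assumes "bernoulli_factory V t" "p \<in> leaves t"
    and "\<forall>j < length p. \<forall>i. t (take j p) = Coin i \<longrightarrow> 0 < (if p ! j then x $ i else 1 - x $ i)"
  shows "0 < path_prob t x p"
  unfolding path_prob_def
proof (intro prod_pos)
  fix j assume "j \<in> {..<length p}"
  then have j: "j < length p" by simp
  then consider i where "t (take j p) = Coin i"
    | c where "t (take j p) = Const c" "0 < c" "c < 1"
    using leaf_path_inner_node[OF assms(1,2)] by blast
  then show "0 < step_prob t x p j"
    by cases (use assms(3) j in \<open>auto simp: step_prob_def\<close>)
qed

text \<open>Since \<open>\<bar>y - x\<^sub>i\<bar> = (1 - 2 x\<^sub>i) (y - x\<^sub>i)\<close> for \<open>y \<in> [0,1]\<close> when \<open>x\<^sub>i \<in> {0,1}\<close>, the expected distance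
  of the output's \<open>i\<close>-th coordinate from its mean is linear in the output, hence zero.\<close>

lemma strong_factory_extreme_coordinate:
  assumes sbf: "strong_bernoulli_factory P t"
    and cube: "\<forall>y\<in>P. \<forall>j. 0 \<le> y $ j \<and> y $ j \<le> 1"
    and x: "x \<in> P" "x $ i \<in> {0, 1}"
    and p: "p \<in> leaves t" "0 < path_prob t x p"
  shows "leaf_label (t p) $ i = x $ i"
proof -
  define w where "w q = path_prob t x q" for q
  define y where "y q = leaf_label (t q) $ i" for q
  have bf: "bernoulli_factory {v. v extreme_point_of P} t"
    and total: "(w has_sum 1) (leaves t)"
    and "((\<lambda>q. w q *\<^sub>R leaf_label (t q)) has_sum x) (leaves t)"
    using sbf x(1) unfolding strong_bernoulli_factory_def w_def by auto
  from has_sum_bounded_linear[OF bounded_linear_vec_nth[of i] this(3)]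
  have mean: "((\<lambda>q. w q * y q) has_sum x $ i) (leaves t)"
    by (simp add: y_def)
  have y01: "0 \<le> y q \<and> y q \<le> 1" if "q \<in> leaves t" for q
    using leaf_label_in_outputs[OF bf that] cube unfolding y_def extreme_point_of_def by auto
  have "((\<lambda>q. w q * y q + - (w q * x $ i)) has_sum 0) (leaves t)"
    using has_sum_add[OF mean has_sum_uminusI[OF has_sum_cmult_left[OF total, of "x $ i"]]]
    by simp
  from has_sum_cmult_right[OF this, of "1 - 2 * x $ i"]
  have "((\<lambda>q. (1 - 2 * x $ i) * (w q * y q + - (w q * x $ i))) has_sum 0) (leaves t)"
    by simp
  then have dist: "((\<lambda>q. w q * \<bar>y q - x $ i\<bar>) has_sum 0) (leaves t)"
    by (rule has_sum_cong[THEN iffD1, rotated]) (use x(2) y01 in \<open>auto simp: algebra_simps\<close>)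
  have "w p * \<bar>y p - x $ i\<bar> = 0"
    by (rule nonneg_has_sum_le_0D[OF dist order.refl _ p(1)])
      (use path_prob_nonneg[OF bf _ ] cube x(1) in \<open>auto simp: w_def\<close>)
  with p(2) show ?thesis by (simp add: w_def y_def)
qed

lemma ex_Pkn_point_with_coordinate:
  fixes i :: "'n::finite"
  assumes "1 < k" "k + 1 < CARD('n)" "0 \<le> b" "b \<le> 1"
  shows "\<exists>x \<in> Pkn k. x $ i = b \<and> (\<forall>j. j \<noteq> i \<longrightarrow> 0 < x $ j \<and> x $ j < 1)"
proof -
  define c where "c = (real k - b) / (real CARD('n) - 1)"
  define x :: "real ^ 'n" where "x = (\<chi> j. if j = i then b else c)"
  have "real k + 1 < real CARD('n)" "1 < real k"
    using assms(1,2) by linarith+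
  then have c: "0 < c" "c < 1" and "(real CARD('n) - 1) * c = real k - b"
    using assms(3,4) unfolding c_def by (simp_all add: field_simps)
  then have "(\<Sum>j\<in>UNIV. x $ j) = real k"
    by (simp add: sum.remove[of UNIV i] x_def card_Diff_singleton of_nat_diff)
  then have "x \<in> Pkn k"
    using assms(3,4) c unfolding Pkn_def by (simp add: x_def)
  then show ?thesis
    using c by (intro bexI[of _ x]) (auto simp: x_def)
qed

lemma leaf_path_flips_coin:
  fixes t :: "('n::finite, real ^ 'n) btree"
  assumes "1 < k" "k + 1 < CARD('n)" and sbf: "strong_bernoulli_factory (Pkn k) t"
    and p: "p \<in> leaves t" and v01: "leaf_label (t p) $ i \<in> {0, 1}"
  shows "\<exists>j < length p. t (take j p) = Coin i \<and> p ! j = (leaf_label (t p) $ i = 1)"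
proof (rule ccontr)
  assume no_flip: "\<not> ?thesis"
  define v where "v = leaf_label (t p) $ i"
  have v: "v = 0 \<or> v = 1"
    using v01 by (auto simp: v_def)
  obtain x where x: "x \<in> Pkn k" "x $ i = 1 - v"
    and interior: "\<forall>j. j \<noteq> i \<longrightarrow> 0 < x $ j \<and> x $ j < 1"
    using ex_Pkn_point_with_coordinate[OF assms(1,2), of "1 - v" i] v by auto
  have bf: "bernoulli_factory {v. v extreme_point_of Pkn k} t"
    using sbf by (simp add: strong_bernoulli_factory_def)
  have "0 < path_prob t x p"
  proof (rule path_prob_pos[OF bf p], intro allI impI)
    fix j i' assume j: "j < length p" and coin: "t (take j p) = Coin i'"
    show "0 < (if p ! j then x $ i' else 1 - x $ i')"
    proof (cases "i' = i")
      case True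
      with no_flip j coin have "p ! j \<longleftrightarrow> v \<noteq> 1"
        by (auto simp: v_def)
      with True x(2) v show ?thesis by auto
    next
      case False
      with interior show ?thesis by simp
    qed
  qed
  moreover have "\<forall>y\<in>Pkn k. \<forall>j. 0 \<le> y $ j \<and> y $ j \<le> 1"
    by (simp add: Pkn_def)
  moreover have "x $ i \<in> {0, 1}"
    using x(2) v by auto
  ultimately have "v = x $ i"
    using strong_factory_extreme_coordinate[OF sbf _ x(1) _ p] by (simp add: v_def)
  with x(2) v show False by auto
qed

lemma prod_step_prob_at_coins:
  assumes "\<forall>i\<in>A. t (take (f i) p) = Coin i \<and> p ! f i = b"
  shows "prod (step_prob t x p) (f ` A) = (\<Prod>i\<in>A. if b then x $ i else 1 - x $ i)"
proof -
  have "inj_on f A"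
    using assms by (intro inj_onI) (metis bnode.inject(1))
  then show ?thesis
    using assms by (simp add: prod.reindex step_prob_Coin cong: prod.cong)
qed

lemma path_prob_divisible:
  fixes t :: "('n::finite, 'v) btree"
  assumes "\<forall>i\<in>A. \<exists>j < length p. t (take j p) = Coin i \<and> p ! j"
    and "\<forall>i\<in>B. \<exists>j < length p. t (take j p) = Coin i \<and> \<not> p ! j"
  shows "\<exists>R. polynomial_function R \<and>
           (\<forall>x. path_prob t x p = (\<Prod>i\<in>A. x $ i) * (\<Prod>i\<in>B. 1 - x $ i) * R x)"
proof -
  obtain f where f: "\<forall>i\<in>A. f i < length p \<and> t (take (f i) p) = Coin i \<and> p ! f i"
    using bchoice[OF assms(1)] by blast
  obtain g where g: "\<forall>i\<in>B. g i < length p \<and> t (take (g i) p) = Coin i \<and> \<not> p ! g i"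
    using bchoice[OF assms(2)] by blast
  define J where "J = f ` A \<union> g ` B"
  define R where "R x = prod (step_prob t x p) ({..<length p} - J)" for x
  have J: "J \<subseteq> {..<length p}"
    using f g by (auto simp: J_def)
  have finite_images: "finite (f ` A)" "finite (g ` B)"
    using J finite_subset[of _ "{..<length p}"] by (auto simp: J_def)
  have disjoint: "f ` A \<inter> g ` B = {}"
  proof -
    have "f i \<noteq> g i'" if "i \<in> A" "i' \<in> B" for i i'
      using f g that by metis
    then show ?thesis
      by blast
  qed
  have "path_prob t x p = (\<Prod>i\<in>A. x $ i) * (\<Prod>i\<in>B. 1 - x $ i) * R x" for x
  proof -
    have "path_prob t x p = R x * prod (step_prob t x p) J"
      unfolding path_prob_def R_def by (rule prod.subset_diff[OF J]) simp
    also have "prod (step_prob t x p) J = (\<Prod>i\<in>A. x $ i) * (\<Prod>i\<in>B. 1 - x $ i)"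
      unfolding J_def prod.union_disjoint[OF finite_images disjoint]
      using prod_step_prob_at_coins[of A t f p True x] prod_step_prob_at_coins[of B t g p False x] f g
      by simp
    finally show ?thesis
      by (metis mult.commute)
  qed
  moreover have "polynomial_function R"
    unfolding R_def real_polynomial_function_eq[symmetric]
    by (intro real_polynomial_function_prod) (auto simp: real_polynomial_function_eq polynomial_function_step_prob)
  ultimately show ?thesis
    by blast
qed

lemma leaf_path_prob_divisible:
  fixes t :: "('n::finite, real ^ 'n) btree"
  assumes "1 < k" "k + 1 < CARD('n)" "strong_bernoulli_factory (Pkn k) t"
    and p: "p \<in> leaves t" "leaf_label (t p) = v"
  shows "\<exists>R. polynomial_function R \<and> (\<forall>x. path_prob t x p =
           (\<Prod>i \<in> {i. v $ i = 1}. x $ i) * (\<Prod>i \<in> {i. v $ i = 0}. 1 - x $ i) * R x)"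
proof (rule path_prob_divisible; intro ballI)
  have flip: "\<exists>j < length p. t (take j p) = Coin i \<and> p ! j = (v $ i = 1)" if "v $ i \<in> {0, 1}" for i
    using leaf_path_flips_coin[OF assms(1-3) p(1)] p(2) that by simp
  fix i
  show "i \<in> {i. v $ i = 1} \<Longrightarrow> \<exists>j < length p. t (take j p) = Coin i \<and> p ! j"
    using flip[of i] by simp
  show "i \<in> {i. v $ i = 0} \<Longrightarrow> \<exists>j < length p. t (take j p) = Coin i \<and> \<not> p ! j"
    using flip[of i] by simp
qed

lemma sum_polynomial_multiples:
  fixes g :: "'a::real_normed_vector \<Rightarrow> real"
  assumes "finite S" "\<forall>p\<in>S. \<exists>R. polynomial_function R \<and> (\<forall>x. f p x = g x * R x)"
  shows "\<exists>Q. polynomial_function Q \<and> (\<forall>x. (\<Sum>p\<in>S. f p x) = g x * Q x)"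
proof -
  obtain R where R: "\<forall>p\<in>S. polynomial_function (R p) \<and> (\<forall>x. f p x = g x * R p x)"
    using bchoice[OF assms(2)] by blast
  have "polynomial_function (\<lambda>x. \<Sum>p\<in>S. R p x)"
    using R assms(1) by (intro polynomial_function_sum) auto
  moreover have "(\<Sum>p\<in>S. f p x) = g x * (\<Sum>p\<in>S. R p x)" for x
    using R by (simp add: sum_distrib_left)
  ultimately show ?thesis
    by blast
qed

theorem lemma7p4:
  fixes t :: "('n::finite, real ^ 'n) btree" and k :: nat and v :: "real ^ 'n" and T :: nat
  assumes "1 < k" and "k + 1 < CARD('n)"
    and "strong_bernoulli_factory (Pkn k) t"
    and "v extreme_point_of (Pkn k :: (real ^ 'n) set)"
  shows "\<exists>Q :: real ^ 'n \<Rightarrow> real. polynomial_function Q \<and>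
           (\<forall>x. PvT t v T x =
                (\<Prod>i \<in> {i. v $ i = 1}. x $ i) * (\<Prod>i \<in> {i. v $ i = 0}. 1 - x $ i) * Q x)"
proof -
  define S where "S = {p \<in> leaves t. length p \<le> T \<and> leaf_label (t p) = v}"
  have "finite S"
    by (rule finite_subset[OF _ finite_lists_length_le[of UNIV T]]) (auto simp: S_def)
  moreover have "\<forall>p\<in>S. \<exists>R. polynomial_function R \<and> (\<forall>x. path_prob t x p =
      (\<Prod>i \<in> {i. v $ i = 1}. x $ i) * (\<Prod>i \<in> {i. v $ i = 0}. 1 - x $ i) * R x)"
    using leaf_path_prob_divisible[OF assms(1-3)] by (simp add: S_def)
  ultimately show ?thesis
    unfolding PvT_def S_def[symmetric] by (rule sum_polynomial_multiples)
qed

end
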